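(* Let $\alpha\in\mathbb{N}$. For every $n\geq 2$, the $n$-point Gauss--Hermite quadrature $Q_n^{\mathrm{GH}}$ satisfies \[ e^{\mathrm{wor}}(Q_n^{\mathrm{GH}},\mathscr{H}_\alpha)\geq C_\alpha n^{-\alpha/2}, \] where $C_\alpha>0$ is a constant depending on $\alpha$ but independent of $n$.
   Context: Let $\rho(x)=\frac{1}{\sqrt{2\pi}}\mathrm{e}^{-x^2/2}$ and $L^2_\rho$ the space of (equivalence classes of) measurable $f:\mathbb{R}\to\mathbb{R}$ with $\|f\|_{L^2_\rho}^2=\int_\mathbb{R}|f(x)|^2\rho(x)\,\mathrm{d}x<\infty$. For $\alpha\in\mathbb{N}$, the weighted Sobolev space $\mathscr{H}_\alpha$ is the set of $f\in L^2_\rho$ having weak derivatives $f^{(\tau)}\in L^2_\rho$ for $\tau=1,\dots,\alpha$, with norm $\|f\|_\alpha=(\sum_{\tau=0}^\alpha\|f^{(\tau)}\|_{L^2_\rho}^2)^{1/2}$; elements are identified with their continuous representatives. Let $I(f)=\int_\mathbb{R}f(x)\rho(x)\,\mathrm{d}x$. For a quadrature rule $Q_n$, the worst-case error is $e^{\mathrm{wor}}(Q_n,\mathscr{H}_\alpha)=\sup_{0\neq f\in\mathscr{H}_\alpha}|I(f)-Q_n(f)|/\|f\|_\alpha$. The normalized probabilists' Hermite polynomial is $H_k(x)=\frac{(-1)^k}{\sqrt{k!}}\mathrm{e}^{x^2/2}\frac{\mathrm{d}^k}{\mathrm{d}x^k}\mathrm{e}^{-x^2/2}$. Gauss--Hermite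 quadrature is $Q_n^{\mathrm{GH}}(f)=\sum_{j=1}^n w_j f(\xi_j^{\mathrm{GH}})$, where $\xi_1^{\mathrm{GH}}<\dots<\xi_n^{\mathrm{GH}}$ are the zeros of $H_n$ and $w_j=1/[H_n'(\xi_j^{\mathrm{GH}})]^2$. *)

theory Defs
  imports "HOL-Analysis.Analysis"
begin

definition gauss_rho :: "real \<Rightarrow> real" where
  "gauss_rho x = exp (- (x ^ 2) / 2) / sqrt (2 * pi)"

definition test_function :: "(real \<Rightarrow> real) \<Rightarrow> bool" where
  "test_function \<phi> \<longleftrightarrow>
     (\<forall>k x. ((deriv ^^ k) \<phi>) differentiable (at x)) \<and>
     (\<exists>R. \<forall>x. R < \<bar>x\<bar> \<longrightarrow> \<phi> x = 0)"

definition weak_deriv :: "(real \<Rightarrow> real) \<Rightarrow> (real \<Rightarrow> real) \<Rightarrow> bool" where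
  "weak_deriv f g \<longleftrightarrow>
     (\<forall>\<phi>. test_function \<phi> \<longrightarrow>
        (LINT x|lborel. f x * deriv \<phi> x) = - (LINT x|lborel. g x * \<phi> x))"

definition in_L2rho :: "(real \<Rightarrow> real) \<Rightarrow> bool" where
  "in_L2rho f \<longleftrightarrow> f \<in> borel_measurable lborel \<and>
     integrable lborel (\<lambda>x. (f x)\<^sup>2 * gauss_rho x)"

definition L2rho_norm :: "(real \<Rightarrow> real) \<Rightarrow> real" where
  "L2rho_norm f = sqrt (LINT x|lborel. (f x)\<^sup>2 * gauss_rho x)"

definition sobolev_derivs :: "nat \<Rightarrow> (real \<Rightarrow> real) \<Rightarrow> (nat \<Rightarrow> real \<Rightarrow> real) \<Rightarrow> bool" where
  "sobolev_derivs \<alpha> f D \<longleftrightarrow> D 0 = f \<and>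
     (\<forall>\<tau>\<le>\<alpha>. in_L2rho (D \<tau>)) \<and>
     (\<forall>\<tau><\<alpha>. weak_deriv (D \<tau>) (D (Suc \<tau>)))"

definition sobolev_H :: "nat \<Rightarrow> ((real \<Rightarrow> real) \<times> (nat \<Rightarrow> real \<Rightarrow> real)) set" where
  "sobolev_H \<alpha> = {(f, D). continuous_on UNIV f \<and> sobolev_derivs \<alpha> f D}"

definition sobolev_norm :: "nat \<Rightarrow> (nat \<Rightarrow> real \<Rightarrow> real) \<Rightarrow> real" where
  "sobolev_norm \<alpha> D = sqrt (\<Sum>\<tau>\<le>\<alpha>. (L2rho_norm (D \<tau>))\<^sup>2)"

definition gauss_integral :: "(real \<Rightarrow> real) \<Rightarrow> real" where
  "gauss_integral f = (LINT x|lborel. f x * gauss_rho x)"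

definition hermite :: "nat \<Rightarrow> real \<Rightarrow> real" where
  "hermite k x = (-1) ^ k / sqrt (fact k) * exp (x ^ 2 / 2) *
                  (deriv ^^ k) (\<lambda>t. exp (- (t ^ 2) / 2)) x"

definition gauss_hermite :: "nat \<Rightarrow> (real \<Rightarrow> real) \<Rightarrow> real" where
  "gauss_hermite n f = (\<Sum>\<xi>\<in>{x. hermite n x = 0}. f \<xi> / (deriv (hermite n) \<xi>)\<^sup>2)"

definition worst_case_error :: "nat \<Rightarrow> ((real \<Rightarrow> real) \<Rightarrow> real) \<Rightarrow> ereal" where
  "worst_case_error \<alpha> Q =
     (SUP fD \<in> {(f, D) \<in> sobolev_H \<alpha>. f \<noteq> (\<lambda>_. 0)}.
        ereal (\<bar>gauss_integral (fst fD) - Q (fst fD)\<bar> / sobolev_norm \<alpha> (snd fD)))"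

end

(*
  Let u = He_n(x) e^(-x^2/4) be the Hermite function, so that u'' + q u = 0 with
  q = n + 1/2 - x^2/4, and take the fooling function f = (1 - x^2)^(alpha+1) u^2 on [-1, 1],
  extended by zero.  It vanishes at the Gauss-Hermite nodes, so the quadrature error is I(f).

  The energy E = u'^2 + q u^2 decreases away from 0 and stays within a factor 2 of E(0) on
  [-1, 1]; hence there u^2 <= E(0)/n, |u u'| <= E(0)/sqrt n and u'^2 <= E(0).  Every derivative
  of f is a quadratic form in (u, u') with polynomial coefficients, and each differentiation
  costs a factor O(sqrt n), so ||f||_alpha = O(E(0) n^(alpha/2 - 1)).  Integrating by parts
  against E gives I(f) >= c E(0)/n for large n; for the finitely many remaining n it suffices
  that I(f) > 0.
*)

theory Submission
  imports Defs "HOL-Computational_Algebra.Polynomial"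
begin

lemma has_integral_Icc_real_derivative:
  fixes f f' :: "real \<Rightarrow> real"
  assumes "a \<le> b" "\<And>x. x \<in> {a..b} \<Longrightarrow> (f has_real_derivative f' x) (at x)"
  shows "(f' has_integral (f b - f a)) {a..b}"
  using assms
  by (intro fundamental_theorem_of_calculus)
     (auto simp: has_real_derivative_iff_has_vector_derivative[symmetric]
           intro: has_field_derivative_at_within)

lemma integral_pos_Icc:
  fixes f :: "real \<Rightarrow> real"
  assumes "a < b" "continuous_on {a..b} f" "\<And>x. x \<in> {a..b} \<Longrightarrow> 0 \<le> f x"
    and "c \<in> {a..b}" "0 < f c"
  shows "0 < integral {a..b} f"
proof -
  have "0 \<le> integral {a..b} f"
    using assms(3) by (intro integral_nonneg integrable_continuous_interval assms(2)) auto
  moreover have "integral {a..b} f \<noteq> 0"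
    using integral_eq_0_iff[OF assms(2,1,3)] assms(4,5) by force
  ultimately show ?thesis by linarith
qed

lemma lborel_integral_indicator_Icc:
  fixes h :: "real \<Rightarrow> real"
  assumes "continuous_on {a..b} h"
  shows "integrable lborel (\<lambda>x. indicator {a..b} x * h x)"
    and "(LINT x|lborel. indicator {a..b} x * h x) = integral {a..b} h"
proof -
  have h: "set_integrable lborel {a..b} h"
    by (rule borel_integrable_atLeastAtMost'[OF assms])
  then show "integrable lborel (\<lambda>x. indicator {a..b} x * h x)"
    unfolding set_integrable_def by simp
  show "(LINT x|lborel. indicator {a..b} x * h x) = integral {a..b} h"
    using set_borel_integral_eq_integral(2)[OF h] unfolding set_lebesgue_integral_def by simp
qed

lemma weak_deriv_indicator_Icc:
  fixes f f' :: "real \<Rightarrow> real"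
  assumes "a \<le> b" "\<And>x. (f has_real_derivative f' x) (at x)" "continuous_on {a..b} f'"
    and "f a = 0" "f b = 0"
  shows "weak_deriv (\<lambda>x. indicator {a..b} x * f x) (\<lambda>x. indicator {a..b} x * f' x)"
  unfolding weak_deriv_def
proof (intro allI impI)
  fix \<phi> assume "test_function \<phi>"
  then have diff: "\<And>j x. (deriv ^^ j) \<phi> differentiable (at x)"
    unfolding test_function_def by blast
  have \<phi>: "(\<phi> has_real_derivative deriv \<phi> x) (at x)" for x
    using diff[of 0 x] by (simp add: DERIV_deriv_iff_real_differentiable)
  have "continuous_on {a..b} \<phi>" "continuous_on {a..b} f"
    using \<phi> assms(2) by (meson DERIV_isCont continuous_at_imp_continuous_on)+
  moreover have "continuous_on {a..b} (deriv \<phi>)"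
    using diff[of 1] by (simp add: continuous_at_imp_continuous_on differentiable_imp_continuous_within)
  ultimately have cont: "continuous_on {a..b} \<phi>" "continuous_on {a..b} f" "continuous_on {a..b} (deriv \<phi>)"
    by blast+
  have "((\<lambda>x. f' x * \<phi> x + deriv \<phi> x * f x) has_integral (f b * \<phi> b - f a * \<phi> a)) {a..b}"
    by (rule has_integral_Icc_real_derivative[OF assms(1) DERIV_mult[OF assms(2) \<phi>]])
  then have "integral {a..b} (\<lambda>x. f' x * \<phi> x + deriv \<phi> x * f x) = 0"
    using assms(4,5) by (simp add: integral_unique)
  moreover have "integral {a..b} (\<lambda>x. f' x * \<phi> x + deriv \<phi> x * f x)
      = integral {a..b} (\<lambda>x. f' x * \<phi> x) + integral {a..b} (\<lambda>x. f x * deriv \<phi> x)"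
    using cont assms(3)
    by (simp add: mult.commute[of "deriv \<phi> _"] integral_add integrable_continuous_interval
          continuous_on_mult)
  moreover have "(LINT x|lborel. indicator {a..b} x * f x * deriv \<phi> x) = integral {a..b} (\<lambda>x. f x * deriv \<phi> x)"
    using lborel_integral_indicator_Icc(2)[of a b "\<lambda>x. f x * deriv \<phi> x"] cont
    by (simp add: mult.assoc continuous_on_mult)
  moreover have "(LINT x|lborel. indicator {a..b} x * f' x * \<phi> x) = integral {a..b} (\<lambda>x. f' x * \<phi> x)"
    using lborel_integral_indicator_Icc(2)[of a b "\<lambda>x. f' x * \<phi> x"] cont assms(3)
    by (simp add: mult.assoc continuous_on_mult)
  ultimately show "(LINT x|lborel. indicator {a..b} x * f x * deriv \<phi> x) =
      - (LINT x|lborel. indicator {a..b} x * f' x * \<phi> x)"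
    by linarith
qed

lemma powr_minus_half_eq:
  assumes "0 < x"
  shows "x powr (- real m / 2) = 1 / sqrt x ^ m"
proof -
  have "sqrt x ^ m = (x powr (1/2)) ^ m"
    using assms by (simp add: powr_half_sqrt)
  also have "\<dots> = x powr (real m / 2)"
    using assms by (simp add: powr_power)
  finally show ?thesis
    by (simp add: powr_minus_divide)
qed

lemma eventually_lower_bound_imp_uniform:
  fixes r g :: "nat \<Rightarrow> real"
  assumes "\<And>n. N \<le> n \<Longrightarrow> 0 < r n" "\<And>n. N \<le> n \<Longrightarrow> 0 < g n" "0 < c"
    and "eventually (\<lambda>n. c * g n \<le> r n) sequentially"
  shows "\<exists>C>0. \<forall>n\<ge>N. C * g n \<le> r n"
proof -
  obtain M where M: "\<And>n. M \<le> n \<Longrightarrow> c * g n \<le> r n"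
    using assms(4) by (auto simp: eventually_sequentially)
  define C where "C = Min (insert c ((\<lambda>n. r n / g n) ` {N..<M}))"
  have "0 < C"
    unfolding C_def using assms(1-3) by (auto simp: Min_gr_iff intro!: divide_pos_pos)
  moreover have "C * g n \<le> r n" if "N \<le> n" for n
  proof (cases "M \<le> n")
    case True
    have "C \<le> c"
      unfolding C_def by simp
    then have "C * g n \<le> c * g n"
      using assms(2)[OF that] by (intro mult_right_mono) auto
    also have "\<dots> \<le> r n"
      by (rule M[OF True])
    finally show ?thesis .
  next
    case False
    then have "C \<le> r n / g n"
      unfolding C_def using that by (intro Min_le) auto
    then show ?thesis
      using assms(2)[OF that] by (simp add: le_divide_eq)
  qed
  ultimately show ?thesis by blast
qed

section \<open>Coefficient norm of a polynomial\<close>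

definition coeff_norm :: "real poly \<Rightarrow> real" where
  "coeff_norm p = (\<Sum>i\<le>degree p. \<bar>coeff p i\<bar>)"

lemma coeff_norm_eq_sum: "degree p \<le> m \<Longrightarrow> coeff_norm p = (\<Sum>i\<le>m. \<bar>coeff p i\<bar>)"
  unfolding coeff_norm_def by (rule sum.mono_neutral_left) (auto simp: coeff_eq_0)

lemma coeff_norm_nonneg: "0 \<le> coeff_norm p"
  unfolding coeff_norm_def by (simp add: sum_nonneg)

lemma abs_poly_le_coeff_norm:
  assumes "\<bar>x\<bar> \<le> 1"
  shows "\<bar>poly p x\<bar> \<le> coeff_norm p"
proof -
  have "\<bar>poly p x\<bar> \<le> (\<Sum>i\<le>degree p. \<bar>coeff p i * x ^ i\<bar>)"
    unfolding poly_altdef by (rule sum_abs)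
  also have "\<dots> \<le> (\<Sum>i\<le>degree p. \<bar>coeff p i\<bar>)"
    using assms by (intro sum_mono) (simp add: abs_mult power_abs mult_left_le power_le_one)
  finally show ?thesis unfolding coeff_norm_def .
qed

lemma coeff_norm_add: "coeff_norm (p + q) \<le> coeff_norm p + coeff_norm q"
proof -
  define m where "m = max (degree p) (degree q)"
  have "coeff_norm (p + q) = (\<Sum>i\<le>m. \<bar>coeff p i + coeff q i\<bar>)"
    by (subst coeff_norm_eq_sum[of _ m]) (auto simp: m_def degree_add_le)
  also have "\<dots> \<le> (\<Sum>i\<le>m. \<bar>coeff p i\<bar> + \<bar>coeff q i\<bar>)"
    by (intro sum_mono abs_triangle_ineq)
  also have "\<dots> = coeff_norm p + coeff_norm q"
    by (simp add: sum.distrib coeff_norm_eq_sum[of p m] coeff_norm_eq_sum[of q m] m_def)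
  finally show ?thesis .
qed

lemma coeff_norm_smult: "coeff_norm (smult c p) = \<bar>c\<bar> * coeff_norm p"
  by (cases "c = 0") (simp_all add: coeff_norm_def abs_mult sum_distrib_left)

lemma coeff_norm_diff: "coeff_norm (p - q) \<le> coeff_norm p + coeff_norm q"
  using coeff_norm_add[of p "- q"] coeff_norm_smult[of "-1" q] by simp

lemma coeff_norm_pCons_0: "coeff_norm (pCons 0 p) = coeff_norm p"
proof -
  have "coeff_norm (pCons 0 p) = (\<Sum>i\<le>Suc (degree p). \<bar>coeff (pCons 0 p) i\<bar>)"
    by (rule coeff_norm_eq_sum) (rule degree_pCons_le)
  also have "\<dots> = (\<Sum>i\<le>degree p. \<bar>coeff p i\<bar>)"
    by (subst sum.atMost_Suc_shift) simp
  finally show ?thesis unfolding coeff_norm_def .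
qed

lemma coeff_norm_pderiv_le:
  assumes "degree p \<le> d"
  shows "coeff_norm (pderiv p) \<le> real d * coeff_norm p"
proof -
  have "coeff_norm (pderiv p) = (\<Sum>i\<le>d. \<bar>coeff (pderiv p) i\<bar>)"
    using assms by (intro coeff_norm_eq_sum) (simp add: degree_pderiv)
  also have "\<dots> \<le> (\<Sum>i\<le>d. real d * \<bar>coeff p (Suc i)\<bar>)"
  proof (intro sum_mono)
    fix i
    show "\<bar>coeff (pderiv p) i\<bar> \<le> real d * \<bar>coeff p (Suc i)\<bar>"
    proof (cases "Suc i \<le> d")
      case False
      then show ?thesis using assms by (simp add: coeff_eq_0 coeff_pderiv)
    qed (simp add: coeff_pderiv abs_mult mult_right_mono)
  qed
  also have "\<dots> = real d * (\<Sum>i\<le>d. \<bar>coeff p (Suc i)\<bar>)"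
    by (simp add: sum_distrib_left)
  also have "(\<Sum>i\<le>d. \<bar>coeff p (Suc i)\<bar>) \<le> (\<Sum>i\<le>Suc d. \<bar>coeff p i\<bar>)"
    by (subst sum.atMost_Suc_shift) simp
  also have "(\<Sum>i\<le>Suc d. \<bar>coeff p i\<bar>) = coeff_norm p"
    using assms by (intro coeff_norm_eq_sum[symmetric]) simp
  finally show ?thesis by (simp add: mult_left_mono)
qed

lemma power_Suc_dvd_imp_dvd_pderiv:
  fixes p a :: "'a::idom poly"
  assumes "p ^ Suc j dvd a"
  shows "p ^ j dvd pderiv a"
proof -
  obtain b where b: "a = p ^ Suc j * b" using assms by (rule dvdE)
  have "pderiv a = p ^ j * (p * pderiv b + smult (of_nat (Suc j)) (b * pderiv p))"
    unfolding b pderiv_mult pderiv_power_Suc by (simp add: algebra_simps)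
  then show ?thesis by simp
qed

section \<open>Hermite polynomials and Hermite functions\<close>

fun hermite_poly :: "nat \<Rightarrow> real poly" where
  "hermite_poly 0 = 1"
| "hermite_poly (Suc k) = pCons 0 (hermite_poly k) - pderiv (hermite_poly k)"

declare hermite_poly.simps(2) [simp del]

lemma funpow_deriv_gaussian:
  "(deriv ^^ k) (\<lambda>t. exp (- (t ^ 2) / 2)) =
     (\<lambda>x. (-1) ^ k * poly (hermite_poly k) x * exp (- (x ^ 2) / 2))"
proof (induction k)
  case 0
  then show ?case by simp
next
  case (Suc k)
  have "((\<lambda>x. (-1) ^ k * poly (hermite_poly k) x * exp (- (x ^ 2) / 2)) has_real_derivative
          (-1) ^ Suc k * poly (hermite_poly (Suc k)) x * exp (- (x ^ 2) / 2)) (at x)" for x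
    by (rule derivative_eq_intros refl | simp)+
       (simp add: hermite_poly.simps(2) algebra_simps)
  then show ?case
    unfolding funpow.simps o_def Suc.IH by (intro ext DERIV_imp_deriv)
qed

lemma hermite_eq_hermite_poly: "hermite n x = poly (hermite_poly n) x / sqrt (fact n)"
proof -
  have "exp (x\<^sup>2 / 2) * exp (- x\<^sup>2 / 2) = 1" by (simp add: exp_minus)
  moreover have "(-1::real) ^ n * (-1) ^ n = 1" by (simp flip: power_add mult_2)
  ultimately show ?thesis
    unfolding hermite_def funpow_deriv_gaussian by (simp add: field_simps)
qed

lemma pderiv_hermite_poly:
  "pderiv (hermite_poly (Suc k)) = smult (of_nat (Suc k)) (hermite_poly k)"
proof (induction k)
  case 0
  then show ?case by (simp add: pderiv_pCons hermite_poly.simps(2))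
next
  case (Suc k)
  have "pderiv (hermite_poly (Suc (Suc k))) =
      hermite_poly (Suc k) + pCons 0 (pderiv (hermite_poly (Suc k))) - pderiv (pderiv (hermite_poly (Suc k)))"
    by (simp only: hermite_poly.simps(2)[of "Suc k"] pderiv_diff pderiv_pCons)
  also have "\<dots> = hermite_poly (Suc k) +
      smult (of_nat (Suc k)) (pCons 0 (hermite_poly k) - pderiv (hermite_poly k))"
    by (simp only: Suc pderiv_smult smult_pCons smult_diff_right) (simp add: algebra_simps)
  also have "\<dots> = hermite_poly (Suc k) + smult (of_nat (Suc k)) (hermite_poly (Suc k))"
    by (simp only: hermite_poly.simps(2)[symmetric])
  also have "\<dots> = smult (of_nat (Suc (Suc k))) (hermite_poly (Suc k))"
    by (metis of_nat_Suc smult_1_left smult_add_left)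
  finally show ?case .
qed

lemma hermite_poly_ode:
  "pderiv (pderiv (hermite_poly n)) = pCons 0 (pderiv (hermite_poly n)) - smult (of_nat n) (hermite_poly n)"
proof (cases n)
  case (Suc k)
  have "pderiv (hermite_poly k) = pCons 0 (hermite_poly k) - hermite_poly n"
    using Suc by (simp add: hermite_poly.simps(2))
  then show ?thesis
    using Suc by (simp add: pderiv_hermite_poly pderiv_smult smult_diff_right)
qed simp

lemma hermite_poly_nonzero: "hermite_poly n \<noteq> 0"
proof -
  have "coeff (hermite_poly n) n = 1 \<and> degree (hermite_poly n) \<le> n"
  proof (induction n)
    case (Suc n)
    then have "degree (pderiv (hermite_poly n)) \<le> Suc n" "degree (pCons 0 (hermite_poly n)) \<le> Suc n"
      by (auto simp: degree_pderiv intro: order_trans[OF degree_pCons_le])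
    then have "degree (hermite_poly (Suc n)) \<le> Suc n"
      by (simp add: degree_diff_le hermite_poly.simps(2))
    moreover have "coeff (pderiv (hermite_poly n)) (Suc n) = 0"
      using Suc by (simp add: coeff_pderiv coeff_eq_0)
    ultimately show ?case using Suc by (simp add: hermite_poly.simps(2))
  qed simp
  then show ?thesis by auto
qed

definition hermite_fun :: "nat \<Rightarrow> real \<Rightarrow> real" where
  "hermite_fun n x = poly (hermite_poly n) x * exp (- (x ^ 2) / 4)"

definition hermite_fun' :: "nat \<Rightarrow> real \<Rightarrow> real" where
  "hermite_fun' n x =
     (poly (pderiv (hermite_poly n)) x - x / 2 * poly (hermite_poly n) x) * exp (- (x ^ 2) / 4)"

definition weber_coeff :: "nat \<Rightarrow> real \<Rightarrow> real" where
  "weber_coeff n x = real n + 1/2 - x ^ 2 / 4"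

definition hermite_energy :: "nat \<Rightarrow> real \<Rightarrow> real" where
  "hermite_energy n x = (hermite_fun' n x)\<^sup>2 + weber_coeff n x * (hermite_fun n x)\<^sup>2"

lemma hermite_fun_has_derivative: "(hermite_fun n has_real_derivative hermite_fun' n x) (at x)"
  unfolding hermite_fun_def [abs_def] hermite_fun'_def
  by (rule derivative_eq_intros refl | simp)+ (simp add: algebra_simps)

lemma hermite_fun'_has_derivative:
  "(hermite_fun' n has_real_derivative - weber_coeff n x * hermite_fun n x) (at x)"
proof -
  let ?p = "poly (hermite_poly n)" and ?p' = "poly (pderiv (hermite_poly n))"
  have ode: "poly (pderiv (pderiv (hermite_poly n))) x = x * ?p' x - real n * ?p x"
    by (simp add: hermite_poly_ode)
  have "(hermite_fun' n has_real_derivative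
      (poly (pderiv (pderiv (hermite_poly n))) x - ?p x / 2 - x / 2 * ?p' x) * exp (- (x ^ 2) / 4)
      - x / 2 * (?p' x - x / 2 * ?p x) * exp (- (x ^ 2) / 4)) (at x)"
    unfolding hermite_fun'_def [abs_def]
    by (rule derivative_eq_intros refl | simp)+ (simp add: algebra_simps)
  then show ?thesis
    by (rule DERIV_cong) (simp add: ode weber_coeff_def hermite_fun_def algebra_simps power2_eq_square)
qed

lemma weber_coeff_has_derivative: "(weber_coeff n has_real_derivative - x / 2) (at x within S)"
  unfolding weber_coeff_def [abs_def] by (rule derivative_eq_intros refl | simp)+

lemma hermite_energy_has_derivative:
  "(hermite_energy n has_real_derivative - x / 2 * (hermite_fun n x)\<^sup>2) (at x)"
  unfolding hermite_energy_def [abs_def]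
  by (rule derivative_eq_intros hermite_fun_has_derivative hermite_fun'_has_derivative
        weber_coeff_has_derivative refl | simp)+

lemma continuous_on_hermite_fun [continuous_intros]: "continuous_on S (hermite_fun n)"
  and continuous_on_hermite_fun' [continuous_intros]: "continuous_on S (hermite_fun' n)"
  and continuous_on_hermite_energy [continuous_intros]: "continuous_on S (hermite_energy n)"
  and continuous_on_weber_coeff [continuous_intros]: "continuous_on S (weber_coeff n)"
  by (meson DERIV_isCont continuous_at_imp_continuous_on hermite_fun_has_derivative
        hermite_fun'_has_derivative hermite_energy_has_derivative weber_coeff_has_derivative)+

lemma hermite_energy_le_energy_0: "hermite_energy n x \<le> hermite_energy n 0"
proof (cases "0 \<le> x")
  case True
  show ?thesis
  proof (rule DERIV_nonpos_imp_nonincreasing[OF True])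
    fix z :: real assume "0 \<le> z" "z \<le> x"
    then have "- z / 2 * (hermite_fun n z)\<^sup>2 \<le> 0" by simp
    then show "\<exists>y. DERIV (hermite_energy n) z :> y \<and> y \<le> 0"
      using hermite_energy_has_derivative by blast
  qed
next
  case False
  then have "x \<le> 0" by simp
  then show ?thesis
  proof (rule DERIV_nonneg_imp_nondecreasing)
    fix z :: real assume "x \<le> z" "z \<le> 0"
    then have "0 \<le> - z / 2 * (hermite_fun n z)\<^sup>2" by (simp add: mult_nonpos_nonneg)
    then show "\<exists>y. DERIV (hermite_energy n) z :> y \<and> 0 \<le> y"
      using hermite_energy_has_derivative by blast
  qed
qed

lemma weber_coeff_ge: "\<bar>x\<bar> \<le> 1 \<Longrightarrow> real n + 1/4 \<le> weber_coeff n x"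
  unfolding weber_coeff_def using abs_square_le_1[of x] by simp

lemma hermite_poly_nonroot: "\<exists>x. \<bar>x\<bar> < 1 \<and> poly (hermite_poly n) x \<noteq> 0"
proof -
  have "infinite {-1<..<1::real}"
    by (simp add: infinite_Ioo)
  then have "\<not> {-1<..<1::real} \<subseteq> {x. poly (hermite_poly n) x = 0}"
    using poly_roots_finite[OF hermite_poly_nonzero[of n]] finite_subset by blast
  then show ?thesis
    by (auto simp: abs_less_iff)
qed

lemma hermite_energy_pos: "0 < hermite_energy n 0"
proof -
  obtain x where x: "\<bar>x\<bar> < 1" "poly (hermite_poly n) x \<noteq> 0"
    using hermite_poly_nonroot by blast
  have "0 < weber_coeff n x * (hermite_fun n x)\<^sup>2"
    using weber_coeff_ge[of x n] x by (intro mult_pos_pos) (auto simp: hermite_fun_def)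
  also have "\<dots> \<le> hermite_energy n x"
    unfolding hermite_energy_def by simp
  also have "\<dots> \<le> hermite_energy n 0"
    by (rule hermite_energy_le_energy_0)
  finally show ?thesis .
qed

lemma hermite_fun'_sq_le: "\<bar>x\<bar> \<le> 1 \<Longrightarrow> (hermite_fun' n x)\<^sup>2 \<le> hermite_energy n 0"
proof -
  assume "\<bar>x\<bar> \<le> 1"
  then have "0 \<le> weber_coeff n x * (hermite_fun n x)\<^sup>2"
    using weber_coeff_ge[of x n] by simp
  then show ?thesis
    using hermite_energy_le_energy_0[of n x] unfolding hermite_energy_def by linarith
qed

lemma hermite_fun_sq_le:
  assumes "1 \<le> n" "\<bar>x\<bar> \<le> 1"
  shows "(hermite_fun n x)\<^sup>2 \<le> hermite_energy n 0 / real n"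
proof -
  have "real n * (hermite_fun n x)\<^sup>2 \<le> weber_coeff n x * (hermite_fun n x)\<^sup>2"
    using weber_coeff_ge[OF assms(2), of n] by (intro mult_right_mono) auto
  also have "\<dots> \<le> hermite_energy n x"
    unfolding hermite_energy_def by simp
  also have "\<dots> \<le> hermite_energy n 0"
    by (rule hermite_energy_le_energy_0)
  finally show ?thesis
    using assms(1) by (simp add: field_simps)
qed

lemma abs_hermite_fun_mult_le:
  assumes "1 \<le> n" "\<bar>x\<bar> \<le> 1"
  shows "\<bar>hermite_fun n x * hermite_fun' n x\<bar> \<le> hermite_energy n 0 / sqrt (real n)"
proof (rule power2_le_imp_le)
  have "\<bar>hermite_fun n x * hermite_fun' n x\<bar>\<^sup>2 = (hermite_fun n x)\<^sup>2 * (hermite_fun' n x)\<^sup>2"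
    by (simp add: power_mult_distrib)
  also have "\<dots> \<le> hermite_energy n 0 / real n * hermite_energy n 0"
    by (rule mult_mono[OF hermite_fun_sq_le[OF assms] hermite_fun'_sq_le[OF assms(2)]])
       (use hermite_energy_pos[of n] in auto)
  also have "\<dots> = (hermite_energy n 0 / sqrt (real n))\<^sup>2"
    by (simp add: power_divide power2_eq_square)
  finally show "\<bar>hermite_fun n x * hermite_fun' n x\<bar>\<^sup>2 \<le> (hermite_energy n 0 / sqrt (real n))\<^sup>2" .
  show "0 \<le> hermite_energy n 0 / sqrt (real n)"
    using hermite_energy_pos[of n] by simp
qed

lemma hermite_energy_ge_half:
  assumes "1 \<le> n" "\<bar>x\<bar> \<le> 1"
  shows "hermite_energy n 0 / 2 \<le> hermite_energy n x"
proof -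
  define B where "B = hermite_energy n 0 / (2 * real n)"
  have "norm (hermite_energy n x - hermite_energy n 0) \<le> B * norm (x - 0)"
  proof (rule field_differentiable_bound[where S="{-1..1}" and f'="\<lambda>z. - z / 2 * (hermite_fun n z)\<^sup>2"])
    fix z :: real assume "z \<in> {-1..1}"
    then have z: "\<bar>z\<bar> \<le> 1" by auto
    show "(hermite_energy n has_field_derivative - z / 2 * (hermite_fun n z)\<^sup>2) (at z within {-1..1})"
      by (rule has_field_derivative_at_within[OF hermite_energy_has_derivative])
    have "\<bar>z\<bar> * (hermite_fun n z)\<^sup>2 \<le> 1 * (hermite_energy n 0 / real n)"
      using z hermite_fun_sq_le[OF assms(1) z] by (intro mult_mono) auto
    then show "norm (- z / 2 * (hermite_fun n z)\<^sup>2) \<le> B"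
      unfolding B_def by (simp add: abs_mult)
  qed (use assms(2) in auto)
  moreover have "B * \<bar>x\<bar> \<le> B"
    using assms hermite_energy_pos[of n] unfolding B_def by (intro mult_left_le) auto
  moreover have "B \<le> hermite_energy n 0 / 2"
    using assms hermite_energy_pos[of n] unfolding B_def by (intro divide_left_mono) auto
  ultimately show ?thesis by simp
qed

section \<open>Quadratic forms in a Hermite function and its derivative\<close>

definition weber_mult :: "nat \<Rightarrow> real poly \<Rightarrow> real poly" where
  "weber_mult n a = smult (real n + 1/2) a - smult (1/4) (pCons 0 (pCons 0 a))"

lemma poly_weber_mult: "poly (weber_mult n a) x = weber_coeff n x * poly a x"
  unfolding weber_mult_def weber_coeff_def by (simp add: algebra_simps power2_eq_square)

lemma degree_weber_mult: "degree (weber_mult n a) \<le> degree a + 2"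
  unfolding weber_mult_def
  by (intro degree_diff_le order_trans[OF degree_smult_le])
     (auto intro: order_trans[OF degree_pCons_le])

lemma coeff_norm_weber_mult:
  assumes "1 \<le> n"
  shows "coeff_norm (weber_mult n a) \<le> 2 * real n * coeff_norm a"
proof -
  have "coeff_norm (weber_mult n a) \<le> (real n + 1/2) * coeff_norm a + 1/4 * coeff_norm a"
    using coeff_norm_diff[of "smult (real n + 1/2) a" "smult (1/4) (pCons 0 (pCons 0 a))"]
    unfolding weber_mult_def by (simp add: coeff_norm_smult coeff_norm_pCons_0)
  also have "\<dots> = (real n + 3/4) * coeff_norm a"
    by (simp add: algebra_simps)
  also have "\<dots> \<le> 2 * real n * coeff_norm a"
    using assms by (intro mult_right_mono coeff_norm_nonneg) simp
  finally show ?thesis .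
qed

type_synonym qform = "real poly \<times> real poly \<times> real poly"

fun qform_eval :: "nat \<Rightarrow> qform \<Rightarrow> real \<Rightarrow> real" where
  "qform_eval n (a0, a1, a2) x =
     poly a0 x * (hermite_fun n x)\<^sup>2 + poly a1 x * (hermite_fun n x * hermite_fun' n x)
     + poly a2 x * (hermite_fun' n x)\<^sup>2"

fun qform_deriv :: "nat \<Rightarrow> qform \<Rightarrow> qform" where
  "qform_deriv n (a0, a1, a2) =
     (pderiv a0 - weber_mult n a1,
      pderiv a1 + smult 2 a0 - smult 2 (weber_mult n a2),
      pderiv a2 + a1)"

lemma qform_eval_has_derivative:
  "(qform_eval n A has_real_derivative qform_eval n (qform_deriv n A) x) (at x)"
proof -
  obtain a0 a1 a2 where A: "A = (a0, a1, a2)" by (cases A)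
  let ?u = "hermite_fun n" and ?v = "hermite_fun' n" and ?q = "weber_coeff n"
  have "((\<lambda>x. poly a0 x * (?u x)\<^sup>2 + poly a1 x * (?u x * ?v x) + poly a2 x * (?v x)\<^sup>2)
      has_real_derivative
        (poly (pderiv a0) x * (?u x)\<^sup>2 + poly a0 x * (2 * ?u x * ?v x))
      + (poly (pderiv a1) x * (?u x * ?v x) + poly a1 x * (?v x * ?v x + ?u x * (- ?q x * ?u x)))
      + (poly (pderiv a2) x * (?v x)\<^sup>2 + poly a2 x * (2 * ?v x * (- ?q x * ?u x)))) (at x)"
    by (rule derivative_eq_intros hermite_fun_has_derivative hermite_fun'_has_derivative refl | simp)+
  moreover have "qform_eval n A = (\<lambda>x. poly a0 x * (?u x)\<^sup>2 + poly a1 x * (?u x * ?v x)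
      + poly a2 x * (?v x)\<^sup>2)"
    by (rule ext) (simp add: A)
  ultimately show ?thesis
    by (simp add: A poly_weber_mult pderiv_add pderiv_diff algebra_simps power2_eq_square)
qed

text \<open>The weights \<open>1/n\<close>, \<open>1/\<surd>n\<close>, \<open>1\<close> are the sizes of \<open>u\<^sup>2\<close>, \<open>u u'\<close>, \<open>u'\<^sup>2\<close> on \<open>[-1, 1]\<close>,
  in units of the energy at \<open>0\<close>.\<close>

fun qform_weight :: "nat \<Rightarrow> qform \<Rightarrow> real" where
  "qform_weight n (a0, a1, a2) =
     coeff_norm a0 / real n + coeff_norm a1 / sqrt (real n) + coeff_norm a2"

fun qform_degree_le :: "qform \<Rightarrow> nat \<Rightarrow> bool" where
  "qform_degree_le (a0, a1, a2) d \<longleftrightarrow> degree a0 \<le> d \<and> degree a1 \<le> d \<and> degree a2 \<le> d"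

lemma abs_qform_eval_le:
  assumes "1 \<le> n" "\<bar>x\<bar> \<le> 1"
  shows "\<bar>qform_eval n A x\<bar> \<le> hermite_energy n 0 * qform_weight n A"
proof -
  obtain a0 a1 a2 where A: "A = (a0, a1, a2)" by (cases A)
  define E where "E = hermite_energy n 0"
  have "\<bar>poly a0 x * (hermite_fun n x)\<^sup>2\<bar> \<le> coeff_norm a0 * (E / real n)"
    unfolding abs_mult E_def using abs_poly_le_coeff_norm[OF assms(2)] hermite_fun_sq_le[OF assms]
    by (intro mult_mono) (auto simp: coeff_norm_nonneg)
  moreover have "\<bar>poly a1 x * (hermite_fun n x * hermite_fun' n x)\<bar> \<le> coeff_norm a1 * (E / sqrt (real n))"
    unfolding abs_mult[of "poly a1 x"] E_def
    using abs_poly_le_coeff_norm[OF assms(2)] abs_hermite_fun_mult_le[OF assms]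
    by (intro mult_mono) (auto simp: coeff_norm_nonneg)
  moreover have "\<bar>poly a2 x * (hermite_fun' n x)\<^sup>2\<bar> \<le> coeff_norm a2 * E"
    unfolding abs_mult E_def using abs_poly_le_coeff_norm[OF assms(2)] hermite_fun'_sq_le[OF assms(2)]
    by (intro mult_mono) (auto simp: coeff_norm_nonneg)
  ultimately have "\<bar>qform_eval n A x\<bar> \<le>
      coeff_norm a0 * (E / real n) + coeff_norm a1 * (E / sqrt (real n)) + coeff_norm a2 * E"
    unfolding A qform_eval.simps by linarith
  also have "\<dots> = E * qform_weight n A"
    by (simp add: A field_simps)
  finally show ?thesis unfolding E_def .
qed

lemma qform_degree_le_deriv:
  assumes "qform_degree_le A d"
  shows "qform_degree_le (qform_deriv n A) (d + 2)"
proof -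
  obtain a0 a1 a2 where A: "A = (a0, a1, a2)" by (cases A)
  have le: "degree (pderiv a) \<le> d + 2" "degree (weber_mult n a) \<le> d + 2" "degree a \<le> d + 2"
    if "degree a \<le> d" for a
    using that degree_weber_mult[of n a] by (auto simp: degree_pderiv)
  show ?thesis
    using assms unfolding A qform_deriv.simps qform_degree_le.simps
    by (intro conjI degree_add_le degree_diff_le order_trans[OF degree_smult_le] le) auto
qed

lemma coeff_norm_qform_deriv_le:
  assumes "1 \<le> n" "qform_degree_le (a0, a1, a2) d" "qform_deriv n (a0, a1, a2) = (b0, b1, b2)"
  shows "coeff_norm b0 \<le> real d * coeff_norm a0 + 2 * real n * coeff_norm a1"
    and "coeff_norm b1 \<le> real d * coeff_norm a1 + 2 * coeff_norm a0 + 4 * real n * coeff_norm a2"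
    and "coeff_norm b2 \<le> real d * coeff_norm a2 + coeff_norm a1"
proof -
  have deg: "degree a0 \<le> d" "degree a1 \<le> d" "degree a2 \<le> d"
    using assms(2) by auto
  have b: "b0 = pderiv a0 - weber_mult n a1"
    "b1 = pderiv a1 + smult 2 a0 - smult 2 (weber_mult n a2)" "b2 = pderiv a2 + a1"
    using assms(3) by auto
  show "coeff_norm b0 \<le> real d * coeff_norm a0 + 2 * real n * coeff_norm a1"
    using coeff_norm_diff[of "pderiv a0" "weber_mult n a1"] coeff_norm_pderiv_le[OF deg(1)]
      coeff_norm_weber_mult[OF assms(1), of a1]
    unfolding b by linarith
  show "coeff_norm b1 \<le> real d * coeff_norm a1 + 2 * coeff_norm a0 + 4 * real n * coeff_norm a2"
    using coeff_norm_diff[of "pderiv a1 + smult 2 a0" "smult 2 (weber_mult n a2)"]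
      coeff_norm_add[of "pderiv a1" "smult 2 a0"] coeff_norm_pderiv_le[OF deg(2)]
      coeff_norm_smult[of 2 a0] coeff_norm_smult[of 2 "weber_mult n a2"]
      coeff_norm_weber_mult[OF assms(1), of a2]
    unfolding b by linarith
  show "coeff_norm b2 \<le> real d * coeff_norm a2 + coeff_norm a1"
    using coeff_norm_add[of "pderiv a2" a1] coeff_norm_pderiv_le[OF deg(3)] unfolding b by linarith
qed

lemma qform_weight_deriv_le:
  assumes "1 \<le> n" "qform_degree_le A d"
  shows "qform_weight n (qform_deriv n A) \<le> (real d + 4) * sqrt (real n) * qform_weight n A"
proof -
  obtain a0 a1 a2 where A: "A = (a0, a1, a2)"
    by (cases A)
  obtain b0 b1 b2 where B: "qform_deriv n (a0, a1, a2) = (b0, b1, b2)"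
    by (cases "qform_deriv n (a0, a1, a2)")
  define s where "s = sqrt (real n)"
  define c0 c1 c2 where "c0 = coeff_norm a0" and "c1 = coeff_norm a1" and "c2 = coeff_norm a2"
  have s: "1 \<le> s" "real n = s * s"
    using assms(1) by (auto simp: s_def)
  have c: "0 \<le> c0" "0 \<le> c1" "0 \<le> c2"
    by (auto simp: c0_def c1_def c2_def coeff_norm_nonneg)
  note b = coeff_norm_qform_deriv_le[OF assms(1) assms(2)[unfolded A] B, folded c0_def c1_def c2_def]
  have "qform_weight n (qform_deriv n A)
      \<le> (real d * c0 + 2 * real n * c1) / real n + (real d * c1 + 2 * c0 + 4 * real n * c2) / s
        + (real d * c2 + c1)"
    using s b unfolding A B qform_weight.simps s_def by (intro add_mono divide_right_mono) auto
  also have "\<dots> = real d * c0 / (s * s) + real d * c1 / s + real d * c2 + 2 * c0 / s + 3 * c1 + 4 * s * c2"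
    using s by (simp add: field_simps)
  also have "\<dots> \<le> real d * c0 / s + real d * c1 + real d * c2 * s + 4 * c0 / s + 4 * c1 + 4 * s * c2"
  proof -
    have "real d * c0 / (s * s) \<le> real d * c0 / s"
      using s c by (intro divide_left_mono) auto
    moreover have "real d * c1 / s \<le> real d * c1"
      using divide_left_mono[of 1 s "real d * c1"] s c by simp
    moreover have "real d * c2 \<le> real d * c2 * s"
      using mult_left_mono[of 1 s "real d * c2"] s c by simp
    moreover have "2 * c0 / s \<le> 4 * c0 / s"
      using s c by (intro divide_right_mono) auto
    ultimately show ?thesis
      using c by linarith
  qed
  also have "\<dots> = (real d + 4) * s * (c0 / real n + c1 / s + c2)"
    using s by (simp add: field_simps)
  finally show ?thesis
    by (simp add: A s_def c0_def c1_def c2_def)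
qed

section \<open>Derivatives of the fooling function\<close>

definition cutoff_poly :: "nat \<Rightarrow> real poly" where
  "cutoff_poly k = [:1, 0, -1:] ^ k"

lemma poly_cutoff_poly: "poly (cutoff_poly k) x = (1 - x\<^sup>2) ^ k"
  unfolding cutoff_poly_def by (simp add: power2_eq_square)

definition fooling_form :: "nat \<Rightarrow> nat \<Rightarrow> nat \<Rightarrow> qform" where
  "fooling_form k n m = (qform_deriv n ^^ m) (cutoff_poly k, 0, 0)"

definition fooling_deriv :: "nat \<Rightarrow> nat \<Rightarrow> nat \<Rightarrow> real \<Rightarrow> real" where
  "fooling_deriv k n m = qform_eval n (fooling_form k n m)"

lemma fooling_deriv_0: "fooling_deriv k n 0 x = (1 - x\<^sup>2) ^ k * (hermite_fun n x)\<^sup>2"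
  by (simp add: fooling_deriv_def fooling_form_def poly_cutoff_poly)

lemma fooling_deriv_has_derivative:
  "(fooling_deriv k n m has_real_derivative fooling_deriv k n (Suc m) x) (at x)"
  unfolding fooling_deriv_def fooling_form_def by (simp add: qform_eval_has_derivative)

lemma continuous_on_fooling_deriv [continuous_intros]: "continuous_on S (fooling_deriv k n m)"
  by (meson DERIV_isCont continuous_at_imp_continuous_on fooling_deriv_has_derivative)

lemma qform_degree_le_fooling_form: "qform_degree_le (fooling_form k n m) (2 * k + 2 * m)"
proof (induction m)
  case 0
  have "degree (cutoff_poly k) \<le> 2 * k"
    using degree_power_le[of "[:1, 0, -1::real:]" k] by (simp add: cutoff_poly_def)
  then show ?case by (simp add: fooling_form_def)
next
  case (Suc m)
  then show ?case
    using qform_degree_le_deriv[OF Suc.IH, of n] by (simp add: fooling_form_def)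
qed

definition deriv_growth :: "nat \<Rightarrow> nat \<Rightarrow> real" where
  "deriv_growth k m = (\<Prod>i<m. real (2 * k + 2 * i) + 4)"

lemma deriv_growth_pos: "0 < deriv_growth k m"
  unfolding deriv_growth_def by (intro prod_pos) auto

lemma deriv_growth_mono: "m \<le> m' \<Longrightarrow> deriv_growth k m \<le> deriv_growth k m'"
  unfolding deriv_growth_def by (intro prod_mono2) auto

lemma qform_weight_fooling_form_le:
  assumes "1 \<le> n"
  shows "qform_weight n (fooling_form k n m)
           \<le> deriv_growth k m * sqrt (real n) ^ m * (coeff_norm (cutoff_poly k) / real n)"
proof (induction m)
  case 0
  then show ?case by (simp add: deriv_growth_def fooling_form_def coeff_norm_def)
next
  case (Suc m)
  have "qform_weight n (fooling_form k n (Suc m))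
      \<le> (real (2 * k + 2 * m) + 4) * sqrt (real n) * qform_weight n (fooling_form k n m)"
    using qform_weight_deriv_le[OF assms qform_degree_le_fooling_form] by (simp add: fooling_form_def)
  also have "\<dots> \<le> (real (2 * k + 2 * m) + 4) * sqrt (real n)
      * (deriv_growth k m * sqrt (real n) ^ m * (coeff_norm (cutoff_poly k) / real n))"
    using Suc.IH by (intro mult_left_mono) auto
  also have "\<dots> = deriv_growth k (Suc m) * sqrt (real n) ^ Suc m * (coeff_norm (cutoff_poly k) / real n)"
    by (simp add: deriv_growth_def)
  finally show ?case .
qed

lemma abs_fooling_deriv_le:
  assumes "1 \<le> n" "\<bar>x\<bar> \<le> 1" "m \<le> M"
  shows "\<bar>fooling_deriv k n m x\<bar>
           \<le> hermite_energy n 0 * deriv_growth k M * sqrt (real n) ^ M * coeff_norm (cutoff_poly k) / real n"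
proof -
  have "\<bar>fooling_deriv k n m x\<bar> \<le> hermite_energy n 0 * qform_weight n (fooling_form k n m)"
    unfolding fooling_deriv_def by (rule abs_qform_eval_le[OF assms(1,2)])
  also have "\<dots> \<le> hermite_energy n 0
      * (deriv_growth k m * sqrt (real n) ^ m * (coeff_norm (cutoff_poly k) / real n))"
    using hermite_energy_pos[of n] qform_weight_fooling_form_le[OF assms(1)]
    by (intro mult_left_mono) auto
  also have "\<dots> \<le> hermite_energy n 0
      * (deriv_growth k M * sqrt (real n) ^ M * (coeff_norm (cutoff_poly k) / real n))"
  proof -
    have "deriv_growth k m * sqrt (real n) ^ m \<le> deriv_growth k M * sqrt (real n) ^ M"
      using deriv_growth_mono[OF assms(3), of k] deriv_growth_pos[of k M]
        power_increasing[OF assms(3), of "sqrt (real n)"] assms(1)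
      by (intro mult_mono) auto
    then show ?thesis
      using hermite_energy_pos[of n] coeff_norm_nonneg[of "cutoff_poly k"]
      by (intro mult_left_mono mult_right_mono) auto
  qed
  finally show ?thesis by (simp add: mult.assoc)
qed

lemma dvd_weber_mult:
  assumes "c dvd a"
  shows "c dvd weber_mult n a"
proof -
  have "weber_mult n a = smult (real n + 1/2) a - smult (1/4) ([:0, 0, 1:] * a)"
    by (simp add: weber_mult_def)
  then show ?thesis
    by (simp only:) (intro dvd_diff dvd_smult dvd_mult assms)
qed

fun qform_dvd :: "real poly \<Rightarrow> qform \<Rightarrow> bool" where
  "qform_dvd c (a0, a1, a2) \<longleftrightarrow> c dvd a0 \<and> c dvd a1 \<and> c dvd a2"

lemma qform_dvd_deriv:
  assumes "qform_dvd (p ^ Suc j) A"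
  shows "qform_dvd (p ^ j) (qform_deriv n A)"
proof -
  obtain a0 a1 a2 where A: "A = (a0, a1, a2)" by (cases A)
  have "p ^ j dvd p ^ Suc j" by (simp add: le_imp_power_dvd)
  then have "p ^ j dvd a0" "p ^ j dvd a1" "p ^ j dvd a2"
    using assms A by (auto intro: dvd_trans)
  moreover have "p ^ j dvd pderiv a0" "p ^ j dvd pderiv a1" "p ^ j dvd pderiv a2"
    using assms A power_Suc_dvd_imp_dvd_pderiv by auto
  ultimately show ?thesis
    unfolding A by (simp add: dvd_smult dvd_weber_mult)
qed

lemma qform_dvd_fooling_form:
  "m \<le> k \<Longrightarrow> qform_dvd ([:1, 0, -1:] ^ (k - m)) (fooling_form k n m)"
proof (induction m)
  case 0
  then show ?case by (simp add: fooling_form_def cutoff_poly_def)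
next
  case (Suc m)
  then have "qform_dvd ([:1, 0, -1:] ^ Suc (k - Suc m)) (fooling_form k n m)"
    by (simp add: Suc_diff_Suc)
  then show ?case
    using qform_dvd_deriv by (simp add: fooling_form_def)
qed

lemma fooling_deriv_at_endpoints:
  assumes "m < k" "x = 1 \<or> x = -1"
  shows "fooling_deriv k n m x = 0"
proof -
  obtain a0 a1 a2 where A: "fooling_form k n m = (a0, a1, a2)" by (cases "fooling_form k n m")
  have "[:1, 0, -1:] dvd ([:1, 0, -1:] :: real poly) ^ (k - m)"
    using assms(1) by simp
  then have "[:1, 0, -1:] dvd a0" "[:1, 0, -1:] dvd a1" "[:1, 0, -1:] dvd a2"
    using qform_dvd_fooling_form[of m k n] assms(1) A by (auto intro: dvd_trans)
  moreover have "poly a x = 0" if "[:1, 0, -1:] dvd a" for a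
    using that assms(2) by (auto simp: dvd_def)
  ultimately show ?thesis
    by (simp add: fooling_deriv_def A)
qed

section \<open>Lower bound for the integral of the fooling function\<close>

definition deriv_poly_div_weber :: "real poly \<Rightarrow> nat \<Rightarrow> real \<Rightarrow> real" where
  "deriv_poly_div_weber g n x =
     poly (pderiv g) x / weber_coeff n x + poly g x * x / (2 * (weber_coeff n x)\<^sup>2)"

lemma weber_coeff_pos: "\<bar>x\<bar> \<le> 1 \<Longrightarrow> 0 < weber_coeff n x"
  using weber_coeff_ge[of x n] by linarith

lemma weber_coeff_nonzero: "x \<in> {-1..1} \<Longrightarrow> weber_coeff n x \<noteq> 0"
  using weber_coeff_pos[of x n] by (simp add: abs_le_iff)

lemma continuous_on_deriv_poly_div_weber [continuous_intros]:
  "continuous_on {-1..1} (deriv_poly_div_weber g n)"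
  unfolding deriv_poly_div_weber_def
  by (intro continuous_intros) (auto simp: weber_coeff_nonzero)

text \<open>Integration by parts against \<open>(g / q) u u'\<close>, using \<open>(u u')' = u'\<^sup>2 - q u\<^sup>2 = E - 2 q u\<^sup>2\<close>.\<close>

lemma integral_poly_hermite_fun_sq_eq:
  assumes "poly g 1 = 0" "poly g (-1) = 0"
  shows "2 * integral {-1..1} (\<lambda>x. poly g x * (hermite_fun n x)\<^sup>2) =
           integral {-1..1} (\<lambda>x. poly g x * hermite_energy n x / weber_coeff n x)
         + integral {-1..1} (\<lambda>x. deriv_poly_div_weber g n x * (hermite_fun n x * hermite_fun' n x))"
    (is "2 * integral _ ?main = integral _ ?E + integral _ ?R")
proof -
  define h where "h x = poly g x / weber_coeff n x * (hermite_fun n x * hermite_fun' n x)" for x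
  have "((\<lambda>x. ?R x + ?E x - 2 * ?main x) has_integral (h 1 - h (-1))) {-1..1}"
  proof (rule has_integral_Icc_real_derivative)
    fix x :: real assume "x \<in> {-1..1}"
    then have q: "weber_coeff n x \<noteq> 0"
      by (rule weber_coeff_nonzero)
    let ?u = "hermite_fun n" and ?v = "hermite_fun' n" and ?q = "weber_coeff n"
    have "(h has_real_derivative
        (poly (pderiv g) x * ?q x - poly g x * (- x / 2)) / (?q x * ?q x) * (?u x * ?v x)
        + poly g x / ?q x * (?v x * ?v x + ?u x * (- ?q x * ?u x))) (at x)"
      unfolding h_def [abs_def]
      by (rule derivative_eq_intros hermite_fun_has_derivative hermite_fun'_has_derivative
            weber_coeff_has_derivative refl | use q in simp)+
    then show "(h has_real_derivative ?R x + ?E x - 2 * ?main x) (at x)"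
      by (rule DERIV_cong)
         (use q in \<open>simp add: deriv_poly_div_weber_def hermite_energy_def field_simps power2_eq_square\<close>)
  qed simp
  moreover have "h 1 = 0" "h (-1) = 0"
    using assms by (auto simp: h_def)
  ultimately have "integral {-1..1} (\<lambda>x. ?R x + ?E x - 2 * ?main x) = 0"
    by (simp add: integral_unique)
  moreover have "integral {-1..1} (\<lambda>x. ?R x + ?E x - 2 * ?main x)
      = integral {-1..1} ?R + integral {-1..1} ?E - 2 * integral {-1..1} ?main"
  proof -
    have "?R integrable_on {-1..1}" "?main integrable_on {-1..1}"
      by (intro integrable_continuous_interval continuous_intros)+
    moreover have "?E integrable_on {-1..1}"
      by (intro integrable_continuous_interval continuous_intros) (auto simp: weber_coeff_nonzero)
    ultimately show ?thesis
      by (simp add: integral_add integral_diff integrable_add)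
  qed
  ultimately show ?thesis by linarith
qed

lemma abs_deriv_poly_div_weber_le:
  assumes "1 \<le> n" "\<bar>x\<bar> \<le> 1" "\<bar>poly g x\<bar> \<le> 1"
  shows "\<bar>deriv_poly_div_weber g n x\<bar> \<le> (coeff_norm (pderiv g) + 1) / real n"
proof -
  define q where "q = weber_coeff n x"
  have n: "1 \<le> real n" and q: "real n \<le> q"
    using assms(1) weber_coeff_ge[OF assms(2), of n] by (auto simp: q_def)
  have "\<bar>poly (pderiv g) x\<bar> / q \<le> coeff_norm (pderiv g) / real n"
    using abs_poly_le_coeff_norm[OF assms(2)] n q by (intro frac_le coeff_norm_nonneg) auto
  moreover have "\<bar>poly g x * x\<bar> / (2 * q\<^sup>2) \<le> 1 / real n"
  proof (rule frac_le)
    show "\<bar>poly g x * x\<bar> \<le> 1"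
      using assms(2,3) by (simp add: abs_mult mult_le_one)
    have "1 * real n \<le> q * q"
      using n q by (intro mult_mono) auto
    then show "real n \<le> 2 * q\<^sup>2"
      by (simp add: power2_eq_square)
  qed (use n in auto)
  moreover have "\<bar>deriv_poly_div_weber g n x\<bar>
      \<le> \<bar>poly (pderiv g) x\<bar> / q + \<bar>poly g x * x\<bar> / (2 * q\<^sup>2)"
    unfolding deriv_poly_div_weber_def q_def[symmetric]
    using abs_triangle_ineq[of "poly (pderiv g) x / q" "poly g x * x / (2 * q\<^sup>2)"] n q
    by simp
  ultimately show ?thesis
    by (simp add: add_divide_distrib)
qed

lemma integral_energy_div_weber_ge:
  assumes "1 \<le> n" "\<And>x. \<bar>x\<bar> \<le> 1 \<Longrightarrow> 0 \<le> poly g x"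
  shows "hermite_energy n 0 / (4 * real n) * integral {-1..1} (poly g)
           \<le> integral {-1..1} (\<lambda>x. poly g x * hermite_energy n x / weber_coeff n x)"
proof -
  have "integral {-1..1} (\<lambda>x. hermite_energy n 0 / (4 * real n) * poly g x)
      \<le> integral {-1..1} (\<lambda>x. poly g x * hermite_energy n x / weber_coeff n x)"
  proof (rule integral_le)
    show "(\<lambda>x. hermite_energy n 0 / (4 * real n) * poly g x) integrable_on {-1..1}"
      by (intro integrable_continuous_interval continuous_intros)
    show "(\<lambda>x. poly g x * hermite_energy n x / weber_coeff n x) integrable_on {-1..1}"
      by (intro integrable_continuous_interval continuous_intros) (auto simp: weber_coeff_nonzero)
    fix x :: real assume "x \<in> {-1..1}"
    then have x: "\<bar>x\<bar> \<le> 1" by auto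
    have "1 \<le> real n" using assms(1) by simp
    then have q: "0 < weber_coeff n x" "weber_coeff n x \<le> 2 * real n"
      using weber_coeff_pos[OF x, of n] zero_le_power2[of x] unfolding weber_coeff_def by linarith+
    have "hermite_energy n 0 / (4 * real n) = hermite_energy n 0 / 2 / (2 * real n)"
      by simp
    also have "\<dots> \<le> hermite_energy n 0 / 2 / weber_coeff n x"
      using q hermite_energy_pos[of n] by (intro divide_left_mono) auto
    also have "\<dots> \<le> hermite_energy n x / weber_coeff n x"
      using q hermite_energy_ge_half[OF assms(1) x] by (intro divide_right_mono) auto
    finally have "poly g x * (hermite_energy n 0 / (4 * real n))
        \<le> poly g x * (hermite_energy n x / weber_coeff n x)"
      using assms(2)[OF x] by (rule mult_left_mono)
    then show "hermite_energy n 0 / (4 * real n) * poly g x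
        \<le> poly g x * hermite_energy n x / weber_coeff n x"
      by (simp add: mult.commute)
  qed
  then show ?thesis by simp
qed

lemma abs_integral_remainder_le:
  assumes "1 \<le> n" "\<And>x. \<bar>x\<bar> \<le> 1 \<Longrightarrow> \<bar>poly g x\<bar> \<le> 1"
  shows "\<bar>integral {-1..1} (\<lambda>x. deriv_poly_div_weber g n x * (hermite_fun n x * hermite_fun' n x))\<bar>
           \<le> (coeff_norm (pderiv g) + 1) / real n * (hermite_energy n 0 / sqrt (real n)) * 2"
proof -
  have "norm (integral {-1..1} (\<lambda>x. deriv_poly_div_weber g n x * (hermite_fun n x * hermite_fun' n x)))
      \<le> (coeff_norm (pderiv g) + 1) / real n * (hermite_energy n 0 / sqrt (real n)) * (1 - -1)"
  proof (rule integral_bound)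
    fix x :: real assume "x \<in> {-1..1}"
    then have x: "\<bar>x\<bar> \<le> 1" by auto
    show "norm (deriv_poly_div_weber g n x * (hermite_fun n x * hermite_fun' n x))
        \<le> (coeff_norm (pderiv g) + 1) / real n * (hermite_energy n 0 / sqrt (real n))"
      unfolding real_norm_def abs_mult[of "deriv_poly_div_weber g n x"]
      using abs_deriv_poly_div_weber_le[OF assms(1) x assms(2)[OF x]] abs_hermite_fun_mult_le[OF assms(1) x]
      by (intro mult_mono) auto
  qed (simp, intro continuous_intros)
  then show ?thesis by simp
qed

lemma integral_poly_hermite_fun_sq_ge:
  assumes n: "1 \<le> n"
    and g: "poly g 1 = 0" "poly g (-1) = 0" "\<And>x. \<bar>x\<bar> \<le> 1 \<Longrightarrow> 0 \<le> poly g x \<and> poly g x \<le> 1"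
    and large: "16 * (coeff_norm (pderiv g) + 1) \<le> sqrt (real n) * integral {-1..1} (poly g)"
  shows "hermite_energy n 0 * integral {-1..1} (poly g) / (16 * real n)
           \<le> integral {-1..1} (\<lambda>x. poly g x * (hermite_fun n x)\<^sup>2)"
proof -
  define E0 G0 G1 where "E0 = hermite_energy n 0" and "G0 = integral {-1..1} (poly g)"
    and "G1 = coeff_norm (pderiv g)"
  have E0: "0 < E0" and s: "1 \<le> sqrt (real n)"
    using hermite_energy_pos[of n] n by (auto simp: E0_def)
  have "(G1 + 1) / sqrt (real n) \<le> G0 / 16"
    using large s unfolding G0_def G1_def by (simp add: divide_le_eq mult.commute)
  then have "2 * E0 / real n * ((G1 + 1) / sqrt (real n)) \<le> 2 * E0 / real n * (G0 / 16)"
    using E0 by (intro mult_left_mono) auto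
  then have "(G1 + 1) / real n * (E0 / sqrt (real n)) * 2 \<le> 2 * E0 / real n * (G0 / 16)"
    by (simp add: mult.commute mult.left_commute)
  moreover have "E0 / (4 * real n) * G0 \<le> integral {-1..1} (\<lambda>x. poly g x * hermite_energy n x / weber_coeff n x)"
    using integral_energy_div_weber_ge[OF n] g(3) unfolding E0_def G0_def by blast
  moreover have "- ((G1 + 1) / real n * (E0 / sqrt (real n)) * 2)
      \<le> integral {-1..1} (\<lambda>x. deriv_poly_div_weber g n x * (hermite_fun n x * hermite_fun' n x))"
    using abs_integral_remainder_le[OF n, of g] g(3) unfolding E0_def G1_def
    by (smt (verit) abs_le_iff)
  ultimately show ?thesis
    using integral_poly_hermite_fun_sq_eq[OF g(1,2), of n] unfolding E0_def[symmetric] G0_def[symmetric]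
    by (simp add: field_simps)
qed

section \<open>The fooling function in the weighted Sobolev space\<close>

lemma gauss_rho_pos: "0 < gauss_rho x"
  by (simp add: gauss_rho_def)

lemma gauss_rho_le_1: "gauss_rho x \<le> 1"
proof -
  have "1 \<le> sqrt (2 * pi)"
    using pi_gt3 by simp
  then show ?thesis
    unfolding gauss_rho_def by (simp add: divide_le_eq order_trans[OF _ \<open>1 \<le> sqrt (2 * pi)\<close>])
qed

lemma gauss_rho_ge: "\<bar>x\<bar> \<le> 1 \<Longrightarrow> gauss_rho 1 \<le> gauss_rho x"
  using abs_square_le_1[of x] unfolding gauss_rho_def by (intro divide_right_mono) auto

lemma continuous_on_gauss_rho [continuous_intros]: "continuous_on S gauss_rho"
  unfolding gauss_rho_def [abs_def] by (intro continuous_intros) auto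

definition fooling_fun :: "nat \<Rightarrow> nat \<Rightarrow> nat \<Rightarrow> real \<Rightarrow> real" where
  "fooling_fun k n m x = indicator {-1..1} x * fooling_deriv k n m x"

lemma fooling_deriv_0_nonneg: "\<bar>x\<bar> \<le> 1 \<Longrightarrow> 0 \<le> fooling_deriv k n 0 x"
  using abs_square_le_1[of x] by (simp add: fooling_deriv_0)

lemma fooling_deriv_0_pos:
  assumes "\<bar>x\<bar> < 1" "poly (hermite_poly n) x \<noteq> 0"
  shows "0 < fooling_deriv k n 0 x"
proof -
  have "x\<^sup>2 < 1"
    using assms(1) by (simp add: abs_square_less_1)
  then show ?thesis
    using assms(2) by (simp add: fooling_deriv_0 hermite_fun_def)
qed

lemma continuous_on_fooling_fun_0:
  assumes "1 \<le> k"
  shows "continuous_on UNIV (fooling_fun k n 0)"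
proof -
  have "fooling_fun k n 0 x = fooling_deriv k n 0 (max (-1) (min 1 x))" for x
  proof (cases "x \<in> {-1..1}")
    case True
    then have "max (-1) (min 1 x) = x" by simp
    then show ?thesis using True by (simp add: fooling_fun_def)
  next
    case False
    then have "max (-1) (min 1 x) = 1 \<or> max (-1) (min 1 x) = -1" by auto
    then show ?thesis
      using False fooling_deriv_at_endpoints[of 0 k] assms by (auto simp: fooling_fun_def)
  qed
  then have eq: "fooling_fun k n 0 = (\<lambda>x. fooling_deriv k n 0 (max (-1) (min 1 x)))"
    by (rule ext)
  have "continuous_on UNIV (\<lambda>x::real. max (-1) (min 1 x))"
    by (intro continuous_intros)
  then show ?thesis
    unfolding eq by (rule continuous_on_compose2[OF continuous_on_fooling_deriv[of UNIV]]) simp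
qed

lemma fooling_fun_weak_deriv:
  assumes "Suc m < k"
  shows "weak_deriv (fooling_fun k n m) (fooling_fun k n (Suc m))"
  unfolding fooling_fun_def [abs_def]
  using assms
  by (intro weak_deriv_indicator_Icc fooling_deriv_has_derivative continuous_intros
        fooling_deriv_at_endpoints) auto

lemma fooling_fun_sq_gauss_rho:
  "(\<lambda>x. (fooling_fun k n m x)\<^sup>2 * gauss_rho x)
     = (\<lambda>x. indicator {-1..1} x * ((fooling_deriv k n m x)\<^sup>2 * gauss_rho x))"
  by (simp add: fun_eq_iff fooling_fun_def indicator_def)

lemma in_L2rho_fooling_fun: "in_L2rho (fooling_fun k n m)"
proof -
  have c: "continuous_on {-1..1} (fooling_deriv k n m)"
    "continuous_on {-1..1} (\<lambda>x. (fooling_deriv k n m x)\<^sup>2 * gauss_rho x)"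
    by (intro continuous_intros)+
  have "integrable lborel (fooling_fun k n m)"
    using lborel_integral_indicator_Icc(1)[OF c(1)] by (simp add: fooling_fun_def [abs_def])
  then have "fooling_fun k n m \<in> borel_measurable lborel"
    by (rule borel_measurable_integrable)
  moreover have "integrable lborel (\<lambda>x. (fooling_fun k n m x)\<^sup>2 * gauss_rho x)"
    unfolding fooling_fun_sq_gauss_rho by (rule lborel_integral_indicator_Icc(1)[OF c(2)])
  ultimately show ?thesis
    unfolding in_L2rho_def by simp
qed

lemma L2rho_norm_fooling_fun:
  "(L2rho_norm (fooling_fun k n m))\<^sup>2 = integral {-1..1} (\<lambda>x. (fooling_deriv k n m x)\<^sup>2 * gauss_rho x)"
proof -
  have c: "continuous_on {-1..1} (\<lambda>x. (fooling_deriv k n m x)\<^sup>2 * gauss_rho x)"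
    by (intro continuous_intros)
  have "0 \<le> integral {-1..1} (\<lambda>x. (fooling_deriv k n m x)\<^sup>2 * gauss_rho x)"
    by (intro integral_nonneg integrable_continuous_interval c) (simp add: less_imp_le[OF gauss_rho_pos])
  then show ?thesis
    unfolding L2rho_norm_def fooling_fun_sq_gauss_rho lborel_integral_indicator_Icc(2)[OF c] by simp
qed

lemma gauss_integral_fooling_fun:
  "gauss_integral (fooling_fun k n 0) = integral {-1..1} (\<lambda>x. fooling_deriv k n 0 x * gauss_rho x)"
proof -
  have "continuous_on {-1..1} (\<lambda>x. fooling_deriv k n 0 x * gauss_rho x)"
    by (intro continuous_intros)
  moreover have "(\<lambda>x. fooling_fun k n 0 x * gauss_rho x)
      = (\<lambda>x. indicator {-1..1} x * (fooling_deriv k n 0 x * gauss_rho x))"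
    by (simp add: fun_eq_iff fooling_fun_def mult.assoc)
  ultimately show ?thesis
    unfolding gauss_integral_def by (simp add: lborel_integral_indicator_Icc(2))
qed

lemma gauss_hermite_fooling_fun: "gauss_hermite n (fooling_fun k n 0) = 0"
  unfolding gauss_hermite_def
  by (intro sum.neutral) (simp add: hermite_eq_hermite_poly fooling_fun_def fooling_deriv_0 hermite_fun_def)

lemma cutoff_poly_bounds: "\<bar>x\<bar> \<le> 1 \<Longrightarrow> 0 \<le> poly (cutoff_poly k) x \<and> poly (cutoff_poly k) x \<le> 1"
  using abs_square_le_1[of x] by (simp add: poly_cutoff_poly power_le_one)

lemma integral_cutoff_poly_pos: "0 < integral {-1..1} (poly (cutoff_poly k))"
proof (rule integral_pos_Icc[where c = 0])
  show "continuous_on {-1..1} (poly (cutoff_poly k))"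
    by (intro continuous_intros)
  show "0 \<le> poly (cutoff_poly k) x" if "x \<in> {-1..1}" for x
    using cutoff_poly_bounds[of x k] that by (simp add: abs_le_iff)
qed (auto simp: poly_cutoff_poly)

lemma coeff_norm_cutoff_poly_ge: "1 \<le> coeff_norm (cutoff_poly k)"
  using abs_poly_le_coeff_norm[of 0 "cutoff_poly k"] by (simp add: poly_cutoff_poly)

section \<open>The worst-case error\<close>

text \<open>The exponent \<open>\<alpha> + 1\<close> of the cutoff makes the derivatives of order \<open>\<le> \<alpha>\<close> vanish at
  \<open>\<plusminus>1\<close>, so the truncation of \<open>f\<close> to \<open>[-1, 1]\<close> lies in \<open>\<H>\<^sub>\<alpha>\<close>.\<close>

definition fooling_ratio :: "nat \<Rightarrow> nat \<Rightarrow> real" where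
  "fooling_ratio \<alpha> n =
     gauss_integral (fooling_fun (Suc \<alpha>) n 0) / sobolev_norm \<alpha> (fooling_fun (Suc \<alpha>) n)"

lemma fooling_fun_in_sobolev_H: "(fooling_fun (Suc \<alpha>) n 0, fooling_fun (Suc \<alpha>) n) \<in> sobolev_H \<alpha>"
  unfolding sobolev_H_def sobolev_derivs_def
  using continuous_on_fooling_fun_0[of "Suc \<alpha>" n] in_L2rho_fooling_fun fooling_fun_weak_deriv
  by auto

lemma integral_fooling_deriv_0_pos:
  assumes "\<And>x. 0 < w x" "continuous_on {-1..1} w"
  shows "0 < integral {-1..1} (\<lambda>x. (fooling_deriv k n 0 x) ^ p * w x)"
proof -
  obtain x0 where x0: "\<bar>x0\<bar> < 1" "poly (hermite_poly n) x0 \<noteq> 0"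
    using hermite_poly_nonroot by blast
  show ?thesis
  proof (rule integral_pos_Icc[where c = x0])
    show "0 < fooling_deriv k n 0 x0 ^ p * w x0"
      using fooling_deriv_0_pos[OF x0] assms(1) by simp
    show "0 \<le> fooling_deriv k n 0 x ^ p * w x" if "x \<in> {-1..1}" for x
      using fooling_deriv_0_nonneg[of x] that assms(1)[of x] by (simp add: abs_le_iff)
    show "continuous_on {-1..1} (\<lambda>x. fooling_deriv k n 0 x ^ p * w x)"
      by (intro continuous_intros assms(2))
    show "x0 \<in> {-1..1}"
      using x0(1) by auto
  qed simp
qed

lemma gauss_integral_fooling_fun_pos: "0 < gauss_integral (fooling_fun k n 0)"
  using integral_fooling_deriv_0_pos[OF gauss_rho_pos continuous_on_gauss_rho, of k n 1]
  by (simp add: gauss_integral_fooling_fun)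

lemma sobolev_norm_fooling_fun_pos: "0 < sobolev_norm \<alpha> (fooling_fun k n)"
proof -
  have "0 < (L2rho_norm (fooling_fun k n 0))\<^sup>2"
    using integral_fooling_deriv_0_pos[OF gauss_rho_pos continuous_on_gauss_rho, of k n 2]
    by (simp add: L2rho_norm_fooling_fun)
  also have "\<dots> \<le> (\<Sum>\<tau>\<le>\<alpha>. (L2rho_norm (fooling_fun k n \<tau>))\<^sup>2)"
    by (rule member_le_sum) auto
  finally show ?thesis
    unfolding sobolev_norm_def by simp
qed

lemma fooling_ratio_pos: "0 < fooling_ratio \<alpha> n"
  unfolding fooling_ratio_def
  using gauss_integral_fooling_fun_pos sobolev_norm_fooling_fun_pos by simp

lemma worst_case_error_ge_fooling_ratio:
  "ereal (fooling_ratio \<alpha> n) \<le> worst_case_error \<alpha> (gauss_hermite n)"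
proof -
  let ?f = "fooling_fun (Suc \<alpha>) n 0" and ?D = "fooling_fun (Suc \<alpha>) n"
  have "?f \<noteq> (\<lambda>_. 0)"
    using gauss_integral_fooling_fun_pos[of "Suc \<alpha>" n] by (auto simp: gauss_integral_def)
  then have "(?f, ?D) \<in> {(f, D) \<in> sobolev_H \<alpha>. f \<noteq> (\<lambda>_. 0)}"
    using fooling_fun_in_sobolev_H by simp
  moreover have "fooling_ratio \<alpha> n = \<bar>gauss_integral ?f - gauss_hermite n ?f\<bar> / sobolev_norm \<alpha> ?D"
    using gauss_integral_fooling_fun_pos[of "Suc \<alpha>" n]
    by (simp add: fooling_ratio_def gauss_hermite_fooling_fun)
  ultimately show ?thesis
    unfolding worst_case_error_def by (force intro: SUP_upper2)
qed

lemma gauss_integral_fooling_fun_ge: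
  assumes "1 \<le> n" "1 \<le> k"
    and "16 * (coeff_norm (pderiv (cutoff_poly k)) + 1)
           \<le> sqrt (real n) * integral {-1..1} (poly (cutoff_poly k))"
  shows "gauss_rho 1 * (hermite_energy n 0 * integral {-1..1} (poly (cutoff_poly k)) / (16 * real n))
           \<le> gauss_integral (fooling_fun k n 0)"
proof -
  have "poly (cutoff_poly k) 1 = 0" "poly (cutoff_poly k) (-1) = 0"
    using assms(2) by (simp_all add: poly_cutoff_poly)
  then have "gauss_rho 1 * (hermite_energy n 0 * integral {-1..1} (poly (cutoff_poly k)) / (16 * real n))
      \<le> gauss_rho 1 * integral {-1..1} (\<lambda>x. poly (cutoff_poly k) x * (hermite_fun n x)\<^sup>2)"
    using cutoff_poly_bounds gauss_rho_pos[of 1] assms(1,3)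
    by (intro mult_left_mono integral_poly_hermite_fun_sq_ge) auto
  also have "\<dots> \<le> integral {-1..1} (\<lambda>x. fooling_deriv k n 0 x * gauss_rho x)"
    unfolding integral_mult_right[symmetric]
  proof (rule integral_le)
    fix x :: real assume "x \<in> {-1..1}"
    then have x: "\<bar>x\<bar> \<le> 1" by auto
    show "gauss_rho 1 * (poly (cutoff_poly k) x * (hermite_fun n x)\<^sup>2) \<le> fooling_deriv k n 0 x * gauss_rho x"
      using gauss_rho_ge[OF x] cutoff_poly_bounds[OF x, of k]
      by (simp add: fooling_deriv_0 poly_cutoff_poly mult.commute mult_right_mono)
  qed (intro integrable_continuous_interval continuous_intros)+
  finally show ?thesis
    by (simp add: gauss_integral_fooling_fun)
qed

lemma sobolev_norm_fooling_fun_le: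
  assumes "1 \<le> n"
  shows "sobolev_norm \<alpha> (fooling_fun k n)
           \<le> sqrt (2 * (real \<alpha> + 1)) * (hermite_energy n 0 * deriv_growth k \<alpha> * sqrt (real n) ^ \<alpha>
               * coeff_norm (cutoff_poly k) / real n)"
    (is "_ \<le> _ * ?B")
proof -
  have B: "0 \<le> ?B"
    using hermite_energy_pos[of n] deriv_growth_pos[of k \<alpha>] coeff_norm_nonneg by simp
  have "integral {-1..1} (\<lambda>x. (fooling_deriv k n \<tau> x)\<^sup>2 * gauss_rho x) \<le> 2 * ?B\<^sup>2"
    if "\<tau> \<le> \<alpha>" for \<tau>
  proof -
    have pointwise: "(fooling_deriv k n \<tau> x)\<^sup>2 * gauss_rho x \<le> ?B\<^sup>2" if "x \<in> {-1..1}" for x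
    proof -
      from that have x: "\<bar>x\<bar> \<le> 1" by auto
      have "\<bar>fooling_deriv k n \<tau> x\<bar> \<le> ?B"
        using abs_fooling_deriv_le[OF assms x \<open>\<tau> \<le> \<alpha>\<close>] .
      then have "\<bar>fooling_deriv k n \<tau> x\<bar>\<^sup>2 \<le> ?B\<^sup>2"
        by (rule power_mono) simp
      then have "(fooling_deriv k n \<tau> x)\<^sup>2 \<le> ?B\<^sup>2"
        by (simp only: power2_abs)
      then have "(fooling_deriv k n \<tau> x)\<^sup>2 * gauss_rho x \<le> ?B\<^sup>2 * 1"
        using gauss_rho_le_1[of x] gauss_rho_pos[of x] by (intro mult_mono) auto
      then show ?thesis
        by simp
    qed
    have "integral {-1..1} (\<lambda>x. (fooling_deriv k n \<tau> x)\<^sup>2 * gauss_rho x) \<le> integral {-1..1} (\<lambda>x::real. ?B\<^sup>2)"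
      by (intro integral_le integrable_continuous_interval continuous_intros pointwise)
    then show ?thesis by simp
  qed
  then have "(\<Sum>\<tau>\<le>\<alpha>. (L2rho_norm (fooling_fun k n \<tau>))\<^sup>2) \<le> (\<Sum>\<tau>\<le>\<alpha>. 2 * ?B\<^sup>2)"
    by (intro sum_mono) (simp add: L2rho_norm_fooling_fun)
  then have "sobolev_norm \<alpha> (fooling_fun k n) \<le> sqrt (2 * (real \<alpha> + 1) * ?B\<^sup>2)"
    unfolding sobolev_norm_def by (simp add: algebra_simps)
  also have "\<dots> = sqrt (2 * (real \<alpha> + 1)) * ?B"
    by (simp only: real_sqrt_mult real_sqrt_abs abs_of_nonneg[OF B])
  finally show ?thesis .
qed

definition fooling_const :: "nat \<Rightarrow> real" where
  "fooling_const \<alpha> = gauss_rho 1 * integral {-1..1} (poly (cutoff_poly (Suc \<alpha>)))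
     / (16 * sqrt (2 * (real \<alpha> + 1)) * deriv_growth (Suc \<alpha>) \<alpha> * coeff_norm (cutoff_poly (Suc \<alpha>)))"

lemma fooling_const_pos: "0 < fooling_const \<alpha>"
  using integral_cutoff_poly_pos deriv_growth_pos coeff_norm_cutoff_poly_ge[of "Suc \<alpha>"] gauss_rho_pos
  by (simp add: fooling_const_def)

lemma fooling_ratio_ge:
  assumes "1 \<le> n"
    and "16 * (coeff_norm (pderiv (cutoff_poly (Suc \<alpha>))) + 1)
           \<le> sqrt (real n) * integral {-1..1} (poly (cutoff_poly (Suc \<alpha>)))"
  shows "fooling_const \<alpha> * real n powr (- real \<alpha> / 2) \<le> fooling_ratio \<alpha> n"
proof -
  define k E0 G0 Q K where "k = Suc \<alpha>" and "E0 = hermite_energy n 0"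
    and "G0 = integral {-1..1} (poly (cutoff_poly k))" and "Q = coeff_norm (cutoff_poly k)"
    and "K = deriv_growth k \<alpha>"
  have pos: "0 < real n" "0 < E0" "0 < G0" "0 < K" "0 < Q"
    using assms(1) hermite_energy_pos integral_cutoff_poly_pos deriv_growth_pos
      coeff_norm_cutoff_poly_ge[of k]
    by (auto simp: E0_def G0_def K_def Q_def)
  have lower: "gauss_rho 1 * (E0 * G0 / (16 * real n)) \<le> gauss_integral (fooling_fun k n 0)"
    using gauss_integral_fooling_fun_ge[OF assms(1) _ assms(2)] unfolding E0_def G0_def k_def by simp
  have upper: "sobolev_norm \<alpha> (fooling_fun k n)
      \<le> sqrt (2 * (real \<alpha> + 1)) * (E0 * K * sqrt (real n) ^ \<alpha> * Q / real n)"
    using sobolev_norm_fooling_fun_le[OF assms(1)] unfolding E0_def K_def Q_def by simp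
  have "fooling_const \<alpha> * real n powr (- real \<alpha> / 2)
      = gauss_rho 1 * (E0 * G0 / (16 * real n))
        / (sqrt (2 * (real \<alpha> + 1)) * (E0 * K * sqrt (real n) ^ \<alpha> * Q / real n))"
    unfolding powr_minus_half_eq[OF pos(1)] using pos
    by (simp add: fooling_const_def G0_def K_def Q_def k_def field_simps)
  also have "\<dots> \<le> fooling_ratio \<alpha> n"
    unfolding fooling_ratio_def k_def[symmetric]
    using lower upper sobolev_norm_fooling_fun_pos[of \<alpha> k n]
      less_imp_le[OF gauss_integral_fooling_fun_pos[of k n]]
    by (intro frac_le) auto
  finally show ?thesis .
qed

lemma fooling_ratio_eventually_ge:
  "eventually (\<lambda>n. fooling_const \<alpha> * real n powr (- real \<alpha> / 2) \<le> fooling_ratio \<alpha> n) sequentially"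
proof -
  define G0 G1 where "G0 = integral {-1..1} (poly (cutoff_poly (Suc \<alpha>)))"
    and "G1 = coeff_norm (pderiv (cutoff_poly (Suc \<alpha>)))"
  have "filterlim (\<lambda>n. sqrt (real n)) at_top sequentially"
    by (rule filterlim_compose[OF sqrt_at_top filterlim_real_sequentially])
  then have "eventually (\<lambda>n. 16 * (G1 + 1) / G0 \<le> sqrt (real n)) sequentially"
    by (simp add: filterlim_at_top)
  moreover have "eventually (\<lambda>n. 1 \<le> n) sequentially"
    by (rule eventually_ge_at_top)
  ultimately show ?thesis
  proof eventually_elim
    case (elim n)
    then have "16 * (G1 + 1) \<le> sqrt (real n) * G0"
      using integral_cutoff_poly_pos by (simp add: G0_def divide_le_eq mult.commute)
    then show ?case
      using fooling_ratio_ge[OF elim(2)] unfolding G0_def G1_def by blast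
  qed
qed

theorem theorem3p2:
  fixes \<alpha> :: nat
  assumes "1 \<le> \<alpha>"
  shows "\<exists>C > 0. \<forall>n \<ge> 2.
           worst_case_error \<alpha> (gauss_hermite n) \<ge> ereal (C * real n powr (- real \<alpha> / 2))"
  \<comment> \<open>The argument covers \<open>\<alpha> = 0\<close> as well.\<close>
proof -
  have "\<exists>C>0. \<forall>n\<ge>2. C * real n powr (- real \<alpha> / 2) \<le> fooling_ratio \<alpha> n"
    by (rule eventually_lower_bound_imp_uniform[OF _ _ fooling_const_pos fooling_ratio_eventually_ge])
       (simp_all add: fooling_ratio_pos)
  then obtain C where "0 < C" and C: "\<And>n. 2 \<le> n \<Longrightarrow> C * real n powr (- real \<alpha> / 2) \<le> fooling_ratio \<alpha> n"
    by blast
  have "ereal (C * real n powr (- real \<alpha> / 2)) \<le> worst_case_error \<alpha> (gauss_hermite n)"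
    if "2 \<le> n" for n
  proof -
    have "ereal (C * real n powr (- real \<alpha> / 2)) \<le> ereal (fooling_ratio \<alpha> n)"
      using C[OF that] by simp
    also have "\<dots> \<le> worst_case_error \<alpha> (gauss_hermite n)"
      by (rule worst_case_error_ge_fooling_ratio)
    finally show ?thesis .
  qed
  with \<open>0 < C\<close> show ?thesis by blast
qed

end
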